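(* Let $n\geq 3$ and $m\geq 1$. The matching $\mu$ on the face poset of $\Delta_m^{n,2}$ has no critical cells of dimension $0$ or $1$.
   Context: $\Delta_m^{n,2}=\mathrm{VR}(\{0,\ldots,m\}^n;2)$, where $\{0,\ldots,m\}^n$ carries the Manhattan metric $d(x,y)=\sum_i|x_i-y_i|$ and $\mathrm{VR}(X;r)$ is the complex of finite subsets of diameter $\leq r$. Order the vertices as $v_1\prec v_2\prec\cdots\prec v_N$ ($N=(m+1)^n$) in the anti-lexicographic order ($x\prec y$ iff at the largest index $i$ with $x_i\neq y_i$, $x_i<y_i$). Let $T_0$ be the set of all simplices of $\Delta_m^{n,2}$, including the empty simplex. For $i=1,\ldots,N$ put $S_i=\{\sigma\in T_{i-1}: v_i\notin\sigma,\ \sigma\cup\{v_i\}\in T_{i-1}\}$, $\mu(\sigma)=\sigma\cup\{v_i\}$ for $\sigma\in S_i$, and $T_i=T_{i-1}\setminus(S_i\cup\{\sigma\cup\{v_i\}:\sigma\in S_i\})$. The critical cells of $\mu$ are the simplices in $T_N$; the dimension of a simplex is its cardinality minus one. *)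

theory Defs
  imports Main
begin

definition grid :: "nat \<Rightarrow> nat \<Rightarrow> nat list set" where
  "grid n m = {x. length x = n \<and> (\<forall>i<n. x ! i \<le> m)}"

definition manhattan :: "nat list \<Rightarrow> nat list \<Rightarrow> int" where
  "manhattan x y = (\<Sum>i<length x. \<bar>int (x ! i) - int (y ! i)\<bar>)"

text \<open>Simplices of VR({0..m}^n; 2): finite subsets (incl. the empty one) of diameter at most 2.\<close>
definition VR2 :: "nat \<Rightarrow> nat \<Rightarrow> nat list set set" where
  "VR2 n m = {\<sigma>. \<sigma> \<subseteq> grid n m \<and> finite \<sigma> \<and> (\<forall>x\<in>\<sigma>. \<forall>y\<in>\<sigma>. manhattan x y \<le> 2)}"

definition antilex_less :: "nat list \<Rightarrow> nat list \<Rightarrow> bool" where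
  "antilex_less x y \<longleftrightarrow> length x = length y \<and>
     (\<exists>i<length x. x ! i < y ! i \<and> (\<forall>j. i < j \<and> j < length x \<longrightarrow> x ! j = y ! j))"

definition vertex_list :: "nat \<Rightarrow> nat \<Rightarrow> nat list list" where
  "vertex_list n m = (THE vs. set vs = grid n m \<and> sorted_wrt antilex_less vs)"

text \<open>One step of the matching: T_i from T_{i-1} using vertex v_i.\<close>
definition match_S :: "nat list \<Rightarrow> nat list set set \<Rightarrow> nat list set set" where
  "match_S v T = {\<sigma> \<in> T. v \<notin> \<sigma> \<and> insert v \<sigma> \<in> T}"

definition match_step :: "nat list \<Rightarrow> nat list set set \<Rightarrow> nat list set set" where
  "match_step v T = T - (match_S v T \<union> (insert v) ` match_S v T)"

definition critical_cells :: "nat \<Rightarrow> nat \<Rightarrow> nat list set set" where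
  "critical_cells n m = fold match_step (vertex_list n m) (VR2 n m)"

end

theory Submission
  imports Defs
begin

text \<open>
  If the anti-lexicographically least vertex \<open>v\<close> with \<open>\<tau> \<union> {v}\<close> a simplex does not lie
  in \<open>\<tau>\<close>, then no step before \<open>v\<close> touches \<open>\<tau>\<close> or \<open>\<tau> \<union> {v}\<close>, so step \<open>v\<close> matches them.
  A vertex \<open>w \<noteq> 0\<close> has a smaller vertex at distance 1 (lower a nonzero coordinate),
  so \<open>{w}\<close> is matched upwards, while \<open>{0}\<close> is matched with the empty simplex.
  For an edge \<open>{a, b}\<close> with \<open>a \<prec> b\<close>, either \<open>a\<close> and \<open>b\<close> have a common neighbour below \<open>a\<close>,
  and the edge is matched upwards, or no neighbour of \<open>b\<close> lies below \<open>a\<close>, and \<open>{b}\<close> is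
  matched with \<open>{a, b}\<close> at step \<open>a\<close>. The second alternative rests on a small geometric
  fact: if \<open>u \<prec> a \<prec> b\<close> and \<open>u\<close>, \<open>a\<close> are both neighbours of \<open>b\<close>, then either \<open>u\<close> itself
  is a neighbour of \<open>a\<close>, or \<open>a\<close> modified by \<open>\<pm>1\<close> at two coordinates is a common
  neighbour of \<open>a\<close> and \<open>b\<close> below \<open>a\<close>.
\<close>

lemma antilex_less_irrefl: "\<not> antilex_less x x"
  by (auto simp: antilex_less_def)

lemma antilex_less_trans:
  assumes "antilex_less x y" "antilex_less y z"
  shows "antilex_less x z"
proof -
  from assms(1) obtain i where i: "length x = length y" "i < length x" "x ! i < y ! i"
    "\<forall>j. i < j \<and> j < length x \<longrightarrow> x ! j = y ! j" by (auto simp: antilex_less_def)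
  from assms(2) obtain k where k: "length y = length z" "k < length y" "y ! k < z ! k"
    "\<forall>j. k < j \<and> j < length y \<longrightarrow> y ! j = z ! j" by (auto simp: antilex_less_def)
  show ?thesis
    unfolding antilex_less_def
  proof (intro conjI exI[of _ "max i k"])
    show "x ! max i k < z ! max i k"
      using i k by (cases i k rule: linorder_cases) auto
  qed (use i k in auto)
qed

lemma antilex_less_asym: "antilex_less x y \<Longrightarrow> \<not> antilex_less y x"
  using antilex_less_trans antilex_less_irrefl by blast

lemma antilex_less_linear:
  assumes "length x = length y" "x \<noteq> y"
  shows "antilex_less x y \<or> antilex_less y x"
proof -
  define D where "D = {i. i < length x \<and> x ! i \<noteq> y ! i}"
  have "\<exists>i<length x. x ! i \<noteq> y ! i"
    using assms nth_equalityI by blast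
  then have "D \<noteq> {}" "finite D"
    unfolding D_def by auto
  then have "Max D \<in> D" and "\<And>j. j \<in> D \<Longrightarrow> j \<le> Max D"
    by simp_all
  then have "Max D < length x" "x ! Max D \<noteq> y ! Max D"
    and "\<forall>j. Max D < j \<and> j < length x \<longrightarrow> x ! j = y ! j"
    unfolding D_def by (auto simp: not_le[symmetric])
  then show ?thesis
    using assms(1) unfolding antilex_less_def
    by (metis linorder_neqE_nat)
qed

lemma ex_sorted_wrt_list_of_set:
  assumes "finite A" "\<And>x y. x \<in> A \<Longrightarrow> y \<in> A \<Longrightarrow> x \<noteq> y \<Longrightarrow> R x y \<or> R y x"
    and "\<And>x y z. R x y \<Longrightarrow> R y z \<Longrightarrow> R x z"
  shows "\<exists>xs. set xs = A \<and> sorted_wrt R xs"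
  using assms(1,2)
proof (induction A rule: finite_induct)
  case empty
  then show ?case by simp
next
  case (insert x A)
  then obtain xs where xs: "set xs = A" "sorted_wrt R xs" by blast
  define below where "below = filter (\<lambda>y. R y x) xs"
  define above where "above = filter (\<lambda>y. \<not> R y x) xs"
  have "set (below @ x # above) = insert x A"
    using xs unfolding below_def above_def by auto
  moreover have "sorted_wrt R (below @ x # above)"
  proof -
    have "\<forall>z\<in>set above. R x z"
      using insert xs unfolding above_def by auto
    moreover have "\<forall>y\<in>set below. R y x"
      unfolding below_def by simp
    moreover have "sorted_wrt R below" "sorted_wrt R above"
      using xs(2) unfolding below_def above_def by (simp_all add: sorted_wrt_filter)
    ultimately show ?thesis
      using assms(3) by (auto simp: sorted_wrt_append)
  qed
  ultimately show ?case by blast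
qed

lemma sorted_wrt_set_unique:
  assumes "\<And>x y. R x y \<Longrightarrow> \<not> R y x"
  shows "sorted_wrt R xs \<Longrightarrow> sorted_wrt R ys \<Longrightarrow> set xs = set ys \<Longrightarrow> xs = ys"
proof (induction xs arbitrary: ys)
  case Nil
  then show ?case by simp
next
  case (Cons x xs)
  then obtain y ys' where ys: "ys = y # ys'" by (cases ys) auto
  have "x = y"
  proof (rule ccontr)
    assume "x \<noteq> y"
    then have "R y x" "R x y"
      using Cons.prems ys by auto
    then show False using assms by blast
  qed
  moreover have "x \<notin> set xs" "y \<notin> set ys'"
    using Cons.prems(1,2) ys assms by auto
  ultimately have "set xs = set ys'"
    using Cons.prems(3) ys by auto
  then show ?case
    using Cons ys \<open>x = y\<close> by auto
qed

lemma finite_grid: "finite (grid n m)"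
proof -
  have "grid n m \<subseteq> {xs. set xs \<subseteq> {0..m} \<and> length xs = n}"
    unfolding grid_def by (auto simp: in_set_conv_nth)
  then show ?thesis
    using finite_subset finite_lists_length_eq by blast
qed

lemma vertex_list: "set (vertex_list n m) = grid n m" "sorted_wrt antilex_less (vertex_list n m)"
proof -
  let ?enum = "\<lambda>vs. set vs = grid n m \<and> sorted_wrt antilex_less vs"
  have "\<exists>vs. ?enum vs"
  proof (rule ex_sorted_wrt_list_of_set[OF finite_grid])
    show "antilex_less x y \<or> antilex_less y x" if "x \<in> grid n m" "y \<in> grid n m" "x \<noteq> y" for x y
      using that antilex_less_linear unfolding grid_def by simp
  qed (rule antilex_less_trans)
  then obtain vs where vs: "?enum vs" ..
  have "ws = vs" if "?enum ws" for ws
    using that vs by (intro sorted_wrt_set_unique[OF antilex_less_asym]) auto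
  with vs have "?enum (THE vs. ?enum vs)"
    by (intro theI[of ?enum vs])
  then show "set (vertex_list n m) = grid n m" "sorted_wrt antilex_less (vertex_list n m)"
    unfolding vertex_list_def by simp_all
qed

lemma vertex_list_prefix:
  assumes "vertex_list n m = xs @ v # ys"
  shows "set xs = {u \<in> grid n m. antilex_less u v}"
proof -
  have set: "set (xs @ v # ys) = grid n m" and "sorted_wrt antilex_less (xs @ v # ys)"
    using vertex_list[of n m] assms by simp_all
  then have below: "\<forall>u\<in>set xs. antilex_less u v" and above: "\<forall>u\<in>set ys. antilex_less v u"
    by (simp_all add: sorted_wrt_append)
  have "u \<in> set xs" if "u \<in> grid n m" "antilex_less u v" for u
  proof -
    have "u \<noteq> v" "u \<notin> set ys"
      using that(2) above antilex_less_irrefl antilex_less_asym by blast+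
    then show ?thesis
      using that(1) set by auto
  qed
  then show ?thesis
    using set below by auto
qed

lemma ex_antilex_least:
  assumes "S \<subseteq> grid n m" "S \<noteq> {}"
  shows "\<exists>v\<in>S. \<forall>u\<in>S. \<not> antilex_less u v"
proof -
  have "\<exists>x\<in>set (vertex_list n m). x \<in> S"
    using assms by (auto simp: vertex_list(1))
  then obtain xs v ys where split: "vertex_list n m = xs @ v # ys" "v \<in> S" "\<forall>u\<in>set xs. u \<notin> S"
    by (elim split_list_first_propE)
  have "\<not> antilex_less u v" if "u \<in> S" for u
    using that split(3) assms(1) by (auto simp: vertex_list_prefix[OF split(1)])
  then show ?thesis
    using split(2) by blast
qed

lemma not_antilex_less_replicate_0: "\<not> antilex_less u (replicate n 0)"
  by (auto simp: antilex_less_def)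

lemma match_step_iff:
  "\<sigma> \<in> match_step v T \<longleftrightarrow>
     \<sigma> \<in> T \<and> \<not> (v \<notin> \<sigma> \<and> insert v \<sigma> \<in> T) \<and> \<not> (v \<in> \<sigma> \<and> \<sigma> - {v} \<in> T)"
proof -
  have "\<sigma> \<in> insert v ` match_S v T \<longleftrightarrow> v \<in> \<sigma> \<and> \<sigma> - {v} \<in> T \<and> \<sigma> \<in> T"
  proof
    assume "\<sigma> \<in> insert v ` match_S v T"
    then obtain \<tau> where "\<tau> \<in> T" "v \<notin> \<tau>" "insert v \<tau> \<in> T" "\<sigma> = insert v \<tau>"
      unfolding match_S_def by blast
    then show "v \<in> \<sigma> \<and> \<sigma> - {v} \<in> T \<and> \<sigma> \<in> T"
      by simp
  next
    assume "v \<in> \<sigma> \<and> \<sigma> - {v} \<in> T \<and> \<sigma> \<in> T"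
    then show "\<sigma> \<in> insert v ` match_S v T"
      unfolding match_S_def by (intro image_eqI[of _ _ "\<sigma> - {v}"]) (auto simp: insert_absorb)
  qed
  then show ?thesis
    unfolding match_step_def match_S_def by blast
qed

lemma fold_match_step_subset: "fold match_step xs T \<subseteq> T"
proof (induction xs arbitrary: T)
  case Nil
  then show ?case by simp
next
  case (Cons v xs)
  have "match_step v T \<subseteq> T"
    by (auto simp: match_step_iff)
  then show ?case
    using Cons.IH[of "match_step v T"] by simp
qed

lemma fold_match_step_keeps:
  assumes "F \<subseteq> T" "T \<subseteq> K" "\<And>u \<sigma>. u \<in> set xs \<Longrightarrow> \<sigma> \<in> F \<Longrightarrow> u \<notin> \<sigma> \<and> insert u \<sigma> \<notin> K"
  shows "F \<subseteq> fold match_step xs T"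
  using assms
proof (induction xs arbitrary: T)
  case Nil
  then show ?case by simp
next
  case (Cons v xs)
  have "F \<subseteq> match_step v T"
  proof
    fix \<sigma> assume "\<sigma> \<in> F"
    then have "\<sigma> \<in> T" "v \<notin> \<sigma>" "insert v \<sigma> \<notin> K"
      using Cons.prems by auto
    then show "\<sigma> \<in> match_step v T"
      using Cons.prems(2) by (auto simp: match_step_iff)
  qed
  moreover have "match_step v T \<subseteq> K"
    using Cons.prems(2) by (auto simp: match_step_iff)
  ultimately show ?case
    using Cons.IH[of "match_step v T"] Cons.prems(3) by simp
qed

lemma fold_match_step_first_coface:
  assumes down: "\<And>\<sigma> \<rho>. \<sigma> \<in> K \<Longrightarrow> \<rho> \<subseteq> \<sigma> \<Longrightarrow> \<rho> \<in> K"
    and "\<tau> \<in> K" "v \<notin> \<tau>" "insert v \<tau> \<in> K" and before: "\<And>u. u \<in> set xs \<Longrightarrow> insert u \<tau> \<notin> K"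
  shows "\<tau> \<notin> fold match_step (xs @ v # ys) K" "insert v \<tau> \<notin> fold match_step (xs @ v # ys) K"
proof -
  have "u \<notin> \<sigma> \<and> insert u \<sigma> \<notin> K" if "u \<in> set xs" "\<sigma> \<in> {\<tau>, insert v \<tau>}" for u \<sigma>
    using before[OF that(1)] that(2) assms(2,4) down[of "insert u \<sigma>" "insert u \<tau>"]
    by (auto simp: insert_absorb)
  then have "{\<tau>, insert v \<tau>} \<subseteq> fold match_step xs K"
    using assms(2,4) by (intro fold_match_step_keeps) auto
  then have "\<tau> \<notin> match_step v (fold match_step xs K)" "insert v \<tau> \<notin> match_step v (fold match_step xs K)"
    using assms(3) by (auto simp: match_step_iff)
  then show "\<tau> \<notin> fold match_step (xs @ v # ys) K" "insert v \<tau> \<notin> fold match_step (xs @ v # ys) K"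
    using fold_match_step_subset by auto
qed

lemma manhattan_commute: "length x = length y \<Longrightarrow> manhattan x y = manhattan y x"
  unfolding manhattan_def by (simp add: abs_minus_commute)

lemma manhattan_self [simp]: "manhattan x x = 0"
  unfolding manhattan_def by simp

lemma manhattan_triangle:
  assumes "length y = length x"
  shows "manhattan x z \<le> manhattan x y + manhattan y z"
  unfolding manhattan_def assms sum.distrib[symmetric] by (intro sum_mono) arith

lemma manhattan_update:
  assumes "i < length x"
  shows "manhattan (x[i := t]) y
           = manhattan x y - \<bar>int (x ! i) - int (y ! i)\<bar> + \<bar>int t - int (y ! i)\<bar>"
proof -
  let ?rest = "\<Sum>j\<in>{..<length x} - {i}. \<bar>int (x ! j) - int (y ! j)\<bar>"
  have "manhattan x y = \<bar>int (x ! i) - int (y ! i)\<bar> + ?rest"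
    unfolding manhattan_def using assms by (simp add: sum.remove)
  moreover have "manhattan (x[i := t]) y = \<bar>int t - int (y ! i)\<bar> + ?rest"
    unfolding manhattan_def using assms by (simp add: sum.remove)
  ultimately show ?thesis by simp
qed

lemma VR2_empty: "{} \<in> VR2 n m"
  unfolding VR2_def by simp

lemma VR2_insert_iff:
  "insert u \<tau> \<in> VR2 n m \<longleftrightarrow> \<tau> \<in> VR2 n m \<and> u \<in> grid n m \<and> (\<forall>y\<in>\<tau>. manhattan u y \<le> 2)"
proof
  assume "insert u \<tau> \<in> VR2 n m"
  then show "\<tau> \<in> VR2 n m \<and> u \<in> grid n m \<and> (\<forall>y\<in>\<tau>. manhattan u y \<le> 2)"
    unfolding VR2_def by auto
next
  assume u: "\<tau> \<in> VR2 n m \<and> u \<in> grid n m \<and> (\<forall>y\<in>\<tau>. manhattan u y \<le> 2)"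
  have "manhattan y u \<le> 2" if "y \<in> \<tau>" for y
    using u that manhattan_commute[of y u] unfolding VR2_def grid_def by auto
  then show "insert u \<tau> \<in> VR2 n m"
    using u unfolding VR2_def by auto
qed

lemma VR2_subset: "\<sigma> \<in> VR2 n m \<Longrightarrow> \<rho> \<subseteq> \<sigma> \<Longrightarrow> \<rho> \<in> VR2 n m"
  unfolding VR2_def by (auto intro: finite_subset)

lemma critical_cells_subset: "critical_cells n m \<subseteq> VR2 n m"
  unfolding critical_cells_def by (rule fold_match_step_subset)

lemma not_critical_if_least_coface:
  assumes "\<tau> \<in> VR2 n m" "v \<notin> \<tau>" "insert v \<tau> \<in> VR2 n m"
    and least: "\<And>u. u \<in> grid n m \<Longrightarrow> antilex_less u v \<Longrightarrow> insert u \<tau> \<notin> VR2 n m"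
  shows "\<tau> \<notin> critical_cells n m" "insert v \<tau> \<notin> critical_cells n m"
proof -
  have "v \<in> set (vertex_list n m)"
    using assms(3) by (simp add: VR2_insert_iff vertex_list(1))
  then obtain xs ys where split: "vertex_list n m = xs @ v # ys"
    by (meson split_list)
  have before: "insert u \<tau> \<notin> VR2 n m" if "u \<in> set xs" for u
    using that least by (simp add: vertex_list_prefix[OF split])
  show "\<tau> \<notin> critical_cells n m" "insert v \<tau> \<notin> critical_cells n m"
    unfolding critical_cells_def split
    using fold_match_step_first_coface[OF VR2_subset assms(1-3) before] by simp_all
qed

lemma update_in_grid: "x \<in> grid n m \<Longrightarrow> t \<le> m \<Longrightarrow> x[i := t] \<in> grid n m"
  unfolding grid_def by (cases "i < length x") (auto simp: nth_list_update)

lemma lower_neighbour: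
  assumes "w \<in> grid n m" "w \<noteq> replicate n 0"
  shows "\<exists>c\<in>grid n m. antilex_less c w \<and> manhattan c w \<le> 2"
proof -
  have len: "length w = n" and bound: "\<And>i. i < n \<Longrightarrow> w ! i \<le> m"
    using assms(1) unfolding grid_def by auto
  obtain l where l: "l < n" "w ! l > 0"
    using assms(2) len by (metis gr0I length_replicate nth_equalityI nth_replicate)
  define c where "c = w[l := w ! l - 1]"
  have "c \<in> grid n m"
    unfolding c_def using assms(1) bound[OF l(1)] by (intro update_in_grid) auto
  moreover have "antilex_less c w"
    unfolding antilex_less_def c_def using len l by (intro conjI exI[of _ l]) auto
  moreover have "manhattan c w = 1"
    unfolding c_def using len l by (simp add: manhattan_update of_nat_diff)
  ultimately show ?thesis by force
qed

lemma common_lower_neighbour: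
  assumes "a \<in> grid n m" "b \<in> grid n m" "u \<in> grid n m"
    and "antilex_less u a" "antilex_less a b" "manhattan a b \<le> 2" "manhattan u b \<le> 2"
  shows "\<exists>c\<in>grid n m. antilex_less c a \<and> manhattan c a \<le> 2 \<and> manhattan c b \<le> 2"
proof -
  have len: "length a = n" "length b = n" "length u = n"
    and bound: "\<And>i. i < n \<Longrightarrow> a ! i \<le> m" "\<And>i. i < n \<Longrightarrow> b ! i \<le> m"
    using assms(1-3) unfolding grid_def by auto
  obtain p where p: "p < n" "a ! p < b ! p" "\<And>j. p < j \<Longrightarrow> j < n \<Longrightarrow> a ! j = b ! j"
    using assms(5) len unfolding antilex_less_def by auto
  obtain r where r: "r < n" "u ! r < a ! r" "\<And>j. r < j \<Longrightarrow> j < n \<Longrightarrow> u ! j = a ! j"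
    using assms(4) len unfolding antilex_less_def by auto
  show ?thesis
  proof (cases "r \<le> p")
    case True
    txt \<open>Lowering \<open>b\<^sub>p\<close> to \<open>a\<^sub>p \<ge> u\<^sub>p\<close> shortens both \<open>d(b, u)\<close> and \<open>d(b, a)\<close> by \<open>b\<^sub>p - a\<^sub>p \<ge> 1\<close>.\<close>
    define b' where "b' = b[p := a ! p]"
    have "u ! p \<le> a ! p"
      using r True p(1) by (cases "r = p") auto
    then have "manhattan b' u = manhattan b u - (int (b ! p) - int (a ! p))"
      and "manhattan b' a = manhattan b a - (int (b ! p) - int (a ! p))"
      unfolding b'_def using len p by (simp_all add: manhattan_update)
    moreover have "manhattan u a \<le> manhattan u b' + manhattan b' a"
      using len by (intro manhattan_triangle) (simp add: b'_def)
    moreover have "manhattan u b' = manhattan b' u" "manhattan b u = manhattan u b" "manhattan b a = manhattan a b"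
      using len by (simp_all add: manhattan_commute b'_def)
    ultimately have "manhattan u a \<le> 2"
      using assms(6,7) p(2) by linarith
    then show ?thesis
      using assms(3,4,7) by blast
  next
    case False
    txt \<open>Now \<open>p < r\<close>, so \<open>a\<^sub>r = b\<^sub>r\<close> and \<open>a\<^sub>r > u\<^sub>r \<ge> 0\<close>: moving \<open>a\<close> one step towards \<open>b\<close> at \<open>p\<close>
      and one step down at \<open>r\<close> keeps the distance to \<open>b\<close>.\<close>
    define c where "c = a[p := a ! p + 1, r := a ! r - 1]"
    have "a ! p + 1 \<le> m" "a ! r - 1 \<le> m"
      using bound[OF p(1)] bound[OF r(1)] p(2) by linarith+
    then have "c \<in> grid n m"
      unfolding c_def using assms(1) by (intro update_in_grid)
    moreover have "antilex_less c a"
      unfolding antilex_less_def c_def using len r False by (intro conjI exI[of _ r]) auto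
    moreover have "manhattan c a = 2" "manhattan c b = manhattan a b"
      unfolding c_def using len p r False by (simp_all add: manhattan_update of_nat_diff)
    ultimately show ?thesis
      using assms(6) by auto
  qed
qed

lemma singleton_not_critical:
  assumes "w \<in> grid n m"
  shows "{w} \<notin> critical_cells n m"
proof (cases "w = replicate n 0")
  case True
  then show ?thesis
    using not_critical_if_least_coface(2)[of "{}" n m w] assms not_antilex_less_replicate_0
    by (simp add: VR2_empty VR2_insert_iff)
next
  case False
  define S where "S = {u \<in> grid n m. insert u {w} \<in> VR2 n m}"
  have "w \<in> S"
    unfolding S_def using assms by (simp add: VR2_empty VR2_insert_iff)
  then obtain v where v: "v \<in> S" "\<And>u. u \<in> S \<Longrightarrow> \<not> antilex_less u v"
    using ex_antilex_least[of S n m] unfolding S_def by blast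
  obtain c where "c \<in> S" "antilex_less c w"
    using lower_neighbour[OF assms False] assms unfolding S_def by (auto simp: VR2_empty VR2_insert_iff)
  then have "v \<noteq> w"
    using v(2) by blast
  then show ?thesis
    using v unfolding S_def
    by (intro not_critical_if_least_coface(1)) (auto simp: VR2_empty VR2_insert_iff)
qed

lemma edge_not_critical:
  assumes "a \<in> grid n m" "b \<in> grid n m" "antilex_less a b" "manhattan a b \<le> 2"
  shows "{a, b} \<notin> critical_cells n m"
proof (cases "\<exists>c\<in>grid n m. antilex_less c a \<and> manhattan c a \<le> 2 \<and> manhattan c b \<le> 2")
  case True
  then obtain c where c: "c \<in> grid n m" "antilex_less c a" "manhattan c a \<le> 2" "manhattan c b \<le> 2"
    by blast
  define S where "S = {u \<in> grid n m. insert u {a, b} \<in> VR2 n m}"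
  have edge: "{a, b} \<in> VR2 n m"
    using assms by (simp add: VR2_empty VR2_insert_iff)
  then have "c \<in> S"
    unfolding S_def using c by (simp add: VR2_insert_iff)
  then obtain v where v: "v \<in> S" "\<And>u. u \<in> S \<Longrightarrow> \<not> antilex_less u v"
    using ex_antilex_least[of S n m] unfolding S_def by blast
  have "v = c \<or> antilex_less v c"
    using v(2)[OF \<open>c \<in> S\<close>] v(1) c(1) antilex_less_linear[of v c]
    unfolding S_def grid_def by auto
  then have "antilex_less v a"
    using c(2) antilex_less_trans by blast
  then have "v \<notin> {a, b}"
    using assms(3) antilex_less_irrefl antilex_less_asym by blast
  then show ?thesis
    using edge v unfolding S_def
    by (intro not_critical_if_least_coface(1)) auto
next
  case False
  have "insert u {b} \<notin> VR2 n m" if "u \<in> grid n m" "antilex_less u a" for u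
    using that False common_lower_neighbour[OF assms(1,2) that(1,2) assms(3,4)]
    by (auto simp: VR2_insert_iff)
  then have "insert a {b} \<notin> critical_cells n m"
    using assms antilex_less_irrefl
    by (intro not_critical_if_least_coface(2)) (auto simp: VR2_empty VR2_insert_iff)
  then show ?thesis
    by simp
qed

theorem lemma4p8:
  fixes n m :: nat
  assumes "n \<ge> 3" and "m \<ge> 1"
  shows "\<forall>\<sigma> \<in> critical_cells n m. card \<sigma> \<noteq> 1 \<and> card \<sigma> \<noteq> 2"
proof
  fix \<sigma> assume crit: "\<sigma> \<in> critical_cells n m"
  then have simplex: "\<sigma> \<in> VR2 n m"
    using critical_cells_subset by blast
  show "card \<sigma> \<noteq> 1 \<and> card \<sigma> \<noteq> 2"
  proof (intro conjI notI)
    assume "card \<sigma> = 1"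
    then obtain w where "\<sigma> = {w}"
      by (rule card_1_singletonE)
    with crit simplex show False
      using singleton_not_critical by (simp add: VR2_insert_iff)
  next
    assume "card \<sigma> = 2"
    then obtain a b where ab: "\<sigma> = {a, b}" "a \<noteq> b"
      by (meson card_2_iff)
    with simplex have "a \<in> grid n m" "b \<in> grid n m" "manhattan a b \<le> 2" "manhattan b a \<le> 2"
      unfolding VR2_def by auto
    moreover have "antilex_less a b \<or> antilex_less b a"
      using calculation(1,2) ab(2) antilex_less_linear unfolding grid_def by simp
    ultimately show False
      using crit ab edge_not_critical[of a n m b] edge_not_critical[of b n m a]
      by (auto simp: insert_commute)
  qed
qed

end
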